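(* Let $\mathbf{P_0},\mathbf{P_1}$ be $n\times n$ transition probability matrices of irreducible and aperiodic Markov chains on $n$ states, let $\mathbf{P_t}=(1-t)\mathbf{P_0}+t\mathbf{P_1}$ for $t\in[0,1]$, and let $\pi_t$ be the stationary distribution of $\mathbf{P_t}$. Let $\delta\in(0,1]$ and $\epsilon>0$. Then for every integer $T\ge \frac{2\,t_{mix}^2(\epsilon/2)}{\epsilon\delta}$ and every integer $k$ with $\delta\le k/T\le 1$, $$\|\pi_0\mathbf{P_{1/T}}\mathbf{P_{2/T}}\cdots\mathbf{P_{k/T}}-\pi_{k/T}\|_{TV}\le\epsilon.$$
   Context: Distributions are row vectors; $\|\mu-\nu\|_{TV}=\frac12\|\mu-\nu\|_1$. For an irreducible aperiodic transition matrix $\mathbf{P}$ with stationary distribution $\pi$, $t_{mix}(\mathbf{P},\epsilon)=\inf\{T\in\mathbb{N}: \|\nu\mathbf{P}^T-\pi\|_{TV}\le\epsilon \text{ for all distributions }\nu\}$, and $t_{mix}(\epsilon)=\sup_{s\in[0,1]}t_{mix}(\mathbf{P_s},\epsilon)$. *)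

theory Defs
  imports "HOL-Analysis.Analysis"
begin

text \<open>Transition matrices on a finite state space 'n are elements of real^'n^'n,
  row i being the distribution of the next state from state i.
  Distributions are row vectors real^'n; the row vector mu times P is  mu v* P.\<close>

definition is_distribution :: "real^'n::finite \<Rightarrow> bool" where
  "is_distribution \<mu> \<longleftrightarrow> (\<forall>i. \<mu> $ i \<ge> 0) \<and> (\<Sum>i\<in>UNIV. \<mu> $ i) = 1"

definition stochastic :: "real^'n::finite^'n \<Rightarrow> bool" where
  "stochastic P \<longleftrightarrow> (\<forall>i. is_distribution (P $ i))"

fun mpow :: "real^'n::finite^'n \<Rightarrow> nat \<Rightarrow> real^'n^'n" where
  "mpow P 0 = mat 1"
| "mpow P (Suc m) = mpow P m ** P"

definition irreducible_chain :: "real^'n::finite^'n \<Rightarrow> bool" where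
  "irreducible_chain P \<longleftrightarrow> (\<forall>i j. \<exists>m. mpow P m $ i $ j > 0)"

definition aperiodic_chain :: "real^'n::finite^'n \<Rightarrow> bool" where
  "aperiodic_chain P \<longleftrightarrow> (\<forall>i. Gcd {m. m > 0 \<and> mpow P m $ i $ i > 0} = 1)"

definition tv_dist :: "real^'n::finite \<Rightarrow> real^'n \<Rightarrow> real" where
  "tv_dist \<mu> \<nu> = (1/2) * (\<Sum>i\<in>UNIV. \<bar>\<mu> $ i - \<nu> $ i\<bar>)"

definition is_stationary :: "real^'n::finite^'n \<Rightarrow> real^'n \<Rightarrow> bool" where
  "is_stationary P \<pi> \<longleftrightarrow> is_distribution \<pi> \<and> \<pi> v* P = \<pi>"

text \<open>The (unique, for irreducible P) stationary distribution.\<close>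
definition stat_dist :: "real^'n::finite^'n \<Rightarrow> real^'n" where
  "stat_dist P = (THE \<pi>. is_stationary P \<pi>)"

definition tmix :: "real^'n::finite^'n \<Rightarrow> real \<Rightarrow> nat" where
  "tmix P \<epsilon> = (LEAST T. \<forall>\<nu>. is_distribution \<nu> \<longrightarrow>
       tv_dist (\<nu> v* mpow P T) (stat_dist P) \<le> \<epsilon>)"

definition interp :: "real^'n::finite^'n \<Rightarrow> real^'n^'n \<Rightarrow> real \<Rightarrow> real^'n^'n" where
  "interp P0 P1 t = (1 - t) *\<^sub>R P0 + t *\<^sub>R P1"

text \<open>t_mix(eps) = sup over s in [0,1] of t_mix(P_s, eps), valued in the extended reals
  (so that an unbounded supremum is +infinity rather than an arbitrary value).\<close>
definition tmix_unif :: "real^'n::finite^'n \<Rightarrow> real^'n^'n \<Rightarrow> real \<Rightarrow> ereal" where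
  "tmix_unif P0 P1 \<epsilon> = (SUP s\<in>{0..1}. ereal (real (tmix (interp P0 P1 s) \<epsilon>)))"

fun inhom_prod :: "(nat \<Rightarrow> real^'n::finite^'n) \<Rightarrow> nat \<Rightarrow> real^'n^'n" where
  "inhom_prod Q 0 = mat 1"
| "inhom_prod Q (Suc k) = inhom_prod Q k ** Q (Suc k)"

end

theory Submission
  imports Defs
begin

text \<open>
  Write \<open>s = k/T\<close> and \<open>\<tau> = t_mix(P_s, \<epsilon>/2)\<close>. The last \<open>\<tau>\<close> factors
  \<open>P_{(k-\<tau>+1)/T} \<cdots> P_{k/T}\<close> of the product have rows within total variation
  \<open>\<tau>/T\<close> of the rows of \<open>P_s\<close>, and one step of a stochastic matrix does not increase
  total variation, so the product differs from \<open>P_s^\<tau>\<close>, applied to the same distribution,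
  by at most \<open>\<tau>\<^sup>2/T \<le> \<epsilon>/2\<close>; \<open>P_s^\<tau>\<close> in turn brings every distribution within \<open>\<epsilon>/2\<close>
  of \<open>\<pi>_s\<close>. When \<open>\<tau> > k\<close> the hypothesis forces \<open>\<epsilon> > 2\<close> and the claim is trivial.
  That \<open>t_mix(P_s, \<epsilon>/2)\<close> and \<open>\<pi>_s\<close> are meaningful for \<open>s > 0\<close> is the classical
  convergence theorem: \<open>P_1\<close>, hence \<open>P_s\<close>, is primitive, so some power of \<open>P_s\<close> is a
  strict contraction in total variation.
\<close>

lemma vector_matrix_mult_nth: "(x v* A) $ j = (\<Sum>i\<in>UNIV. x $ i * A $ i $ j)"
  by (simp add: vector_matrix_mult_def)

lemma matrix_matrix_mult_nth: "(A ** B) $ i $ j = (\<Sum>k\<in>UNIV. A $ i $ k * B $ k $ j)"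
  by (simp add: matrix_matrix_mult_def)

lemma matrix_matrix_mult_row: "(A ** B) $ i = A $ i v* B"
  by (simp add: vec_eq_iff matrix_matrix_mult_nth vector_matrix_mult_nth)

subsection \<open>Stochastic matrices\<close>

lemma stochastic_nonneg: "stochastic P \<Longrightarrow> 0 \<le> P $ i $ j"
  by (simp add: stochastic_def is_distribution_def)

lemma stochastic_row_sum: "stochastic P \<Longrightarrow> (\<Sum>j\<in>UNIV. P $ i $ j) = 1"
  by (simp add: stochastic_def is_distribution_def)

lemma is_distribution_vector_matrix_mult:
  assumes x: "is_distribution x" and P: "stochastic P"
  shows "is_distribution (x v* P)"
proof -
  have "(\<Sum>j\<in>UNIV. (x v* P) $ j) = (\<Sum>i\<in>UNIV. x $ i * (\<Sum>j\<in>UNIV. P $ i $ j))"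
    unfolding vector_matrix_mult_nth by (subst sum.swap) (simp add: sum_distrib_left)
  also have "\<dots> = 1"
    using x stochastic_row_sum[OF P] by (simp add: is_distribution_def)
  finally show ?thesis
    using x stochastic_nonneg[OF P]
    by (auto simp: is_distribution_def vector_matrix_mult_nth intro!: sum_nonneg)
qed

lemma stochastic_mult: "stochastic A \<Longrightarrow> stochastic B \<Longrightarrow> stochastic (A ** B)"
  by (simp add: stochastic_def matrix_matrix_mult_row is_distribution_vector_matrix_mult)

lemma stochastic_mat_1: "stochastic (mat 1 :: real^'n::finite^'n)"
  by (simp add: stochastic_def is_distribution_def mat_def)

lemma stochastic_mpow: "stochastic P \<Longrightarrow> stochastic (mpow P m)"
  by (induct m) (auto simp: stochastic_mat_1 stochastic_mult)

lemma stochastic_inhom_prod: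
  "(\<And>j. 1 \<le> j \<Longrightarrow> j \<le> m \<Longrightarrow> stochastic (Q j)) \<Longrightarrow> stochastic (inhom_prod Q m)"
  by (induct m) (auto simp: stochastic_mat_1 stochastic_mult)

lemma mpow_add: "mpow P (a + b) = mpow P a ** mpow P b"
  by (induct b) (auto simp: matrix_mul_assoc)

lemma inhom_prod_add:
  "inhom_prod Q (a + m) = inhom_prod Q a ** inhom_prod (\<lambda>j. Q (a + j)) m"
  by (induct m) (auto simp: matrix_mul_assoc)

lemma mpow_entry_mult_le:
  assumes "stochastic P"
  shows "mpow P a $ i $ l * mpow P b $ l $ j \<le> mpow P (a + b) $ i $ j"
  unfolding mpow_add matrix_matrix_mult_nth
  by (rule member_le_sum) (auto intro: mult_nonneg_nonneg stochastic_nonneg stochastic_mpow assms)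

lemma vector_mpow_stationary: "\<pi> v* P = \<pi> \<Longrightarrow> \<pi> v* mpow P m = \<pi>"
  by (induct m) (auto simp: vector_matrix_mul_assoc[symmetric])

subsection \<open>Total variation distance\<close>

lemma tv_dist_nonneg: "0 \<le> tv_dist x y"
  by (simp add: tv_dist_def sum_nonneg)

lemma tv_dist_triangle: "tv_dist x z \<le> tv_dist x y + tv_dist y z"
proof -
  have "(\<Sum>i\<in>UNIV. \<bar>x $ i - z $ i\<bar>) \<le> (\<Sum>i\<in>UNIV. \<bar>x $ i - y $ i\<bar> + \<bar>y $ i - z $ i\<bar>)"
    by (rule sum_mono) auto
  then show ?thesis by (simp add: tv_dist_def sum.distrib)
qed

lemma tv_dist_le_1:
  assumes "is_distribution x" "is_distribution y"
  shows "tv_dist x y \<le> 1"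
proof -
  have "(\<Sum>i\<in>UNIV. \<bar>x $ i - y $ i\<bar>) \<le> (\<Sum>i\<in>UNIV. x $ i + y $ i)"
    using assms by (intro sum_mono) (auto simp: is_distribution_def abs_if)
  then show ?thesis using assms by (simp add: tv_dist_def sum.distrib is_distribution_def)
qed

lemma tv_dist_eq_0_iff: "tv_dist x y = 0 \<longleftrightarrow> x = y"
  by (auto simp: tv_dist_def sum_nonneg_eq_0_iff vec_eq_iff)

lemma l1_vector_matrix_mult_le:
  assumes "stochastic Q" and c: "\<And>i j. c \<le> Q $ i $ j"
    and "(\<Sum>i\<in>UNIV. d $ i) = 0"
  shows "(\<Sum>j\<in>UNIV. \<bar>(d v* Q) $ j\<bar>)
    \<le> (1 - real CARD('n) * c) * (\<Sum>i\<in>UNIV. \<bar>(d :: real^'n::finite) $ i\<bar>)"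
proof -
  \<comment> \<open>Subtracting the constant \<open>c\<close> from \<open>Q\<close> does not change \<open>d v* Q\<close> when \<open>d\<close> has sum 0.\<close>
  have shift: "(d v* Q) $ j = (\<Sum>i\<in>UNIV. d $ i * (Q $ i $ j - c))" for j
  proof -
    have "(\<Sum>i\<in>UNIV. d $ i * (Q $ i $ j - c)) = (d v* Q) $ j - c * (\<Sum>i\<in>UNIV. d $ i)"
      by (simp add: vector_matrix_mult_nth algebra_simps sum_subtractf sum_distrib_left)
    then show ?thesis using assms(3) by simp
  qed
  have "(\<Sum>j\<in>UNIV. \<bar>(d v* Q) $ j\<bar>) \<le> (\<Sum>j\<in>UNIV. \<Sum>i\<in>UNIV. \<bar>d $ i\<bar> * (Q $ i $ j - c))"
    unfolding shift by (intro sum_mono order.trans[OF sum_abs]) (auto simp: abs_mult c)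
  also have "\<dots> = (\<Sum>i\<in>UNIV. \<bar>d $ i\<bar> * (\<Sum>j\<in>UNIV. Q $ i $ j - c))"
    by (subst sum.swap) (simp add: sum_distrib_left)
  also have "\<dots> = (1 - real CARD('n) * c) * (\<Sum>i\<in>UNIV. \<bar>d $ i\<bar>)"
    by (simp add: sum_subtractf stochastic_row_sum[OF assms(1)] sum_distrib_left mult.commute)
  finally show ?thesis .
qed

lemma tv_dist_vector_matrix_mult_contract:
  assumes "stochastic Q" "\<And>i j. c \<le> Q $ i $ j" "is_distribution x" "is_distribution y"
  shows "tv_dist (x v* Q) (y v* Q) \<le> (1 - real CARD('n) * c) * tv_dist x (y :: real^'n::finite)"
proof -
  have "(\<Sum>i\<in>UNIV. (x - y) $ i) = 0"
    using assms(3,4) by (simp add: is_distribution_def sum_subtractf)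
  with l1_vector_matrix_mult_le[OF assms(1,2), of "x - y"] show ?thesis
    by (simp add: tv_dist_def vector_matrix_mult_diff_distrib)
qed

lemma tv_dist_vector_matrix_mult_le:
  assumes "stochastic Q" "is_distribution x" "is_distribution y"
  shows "tv_dist (x v* Q) (y v* Q) \<le> tv_dist x y"
  using tv_dist_vector_matrix_mult_contract[OF assms(1) stochastic_nonneg[OF assms(1)] assms(2,3)]
  by simp

lemma tv_dist_vector_matrix_mult_rows:
  assumes x: "is_distribution x" and rows: "\<And>i. tv_dist (A $ i) (B $ i) \<le> e"
  shows "tv_dist (x v* A) (x v* B) \<le> e"
proof -
  have "(\<Sum>j\<in>UNIV. \<bar>(x v* A) $ j - (x v* B) $ j\<bar>)
      \<le> (\<Sum>j\<in>UNIV. \<Sum>i\<in>UNIV. x $ i * \<bar>A $ i $ j - B $ i $ j\<bar>)"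
    unfolding vector_matrix_mult_nth sum_subtractf[symmetric] right_diff_distrib[symmetric]
    using x by (intro sum_mono order.trans[OF sum_abs]) (auto simp: abs_mult is_distribution_def)
  also have "\<dots> = (\<Sum>i\<in>UNIV. x $ i * (\<Sum>j\<in>UNIV. \<bar>A $ i $ j - B $ i $ j\<bar>))"
    by (subst sum.swap) (simp add: sum_distrib_left)
  also have "\<dots> \<le> (\<Sum>i\<in>UNIV. x $ i * (e * 2))"
    using x rows by (intro sum_mono mult_left_mono) (auto simp: is_distribution_def tv_dist_def)
  also have "\<dots> = e * 2"
    using x by (simp add: is_distribution_def sum_distrib_right[symmetric])
  finally show ?thesis by (simp add: tv_dist_def)
qed

lemma tv_dist_inhom_prod_mpow_le:
  assumes x: "is_distribution x" and B: "stochastic B"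
    and Q: "\<And>j. 1 \<le> j \<Longrightarrow> j \<le> m \<Longrightarrow> stochastic (Q j)"
    and rows: "\<And>j i. 1 \<le> j \<Longrightarrow> j \<le> m \<Longrightarrow> tv_dist (Q j $ i) (B $ i) \<le> e"
  shows "tv_dist (x v* inhom_prod Q m) (x v* mpow B m) \<le> real m * e"
  using Q rows
proof (induct m)
  case 0
  then show ?case by (simp add: tv_dist_def)
next
  case (Suc m)
  define X where "X = x v* inhom_prod Q m"
  define Y where "Y = x v* mpow B m"
  have X: "is_distribution X"
    unfolding X_def using Suc.prems
    by (intro is_distribution_vector_matrix_mult[OF x] stochastic_inhom_prod) auto
  have Y: "is_distribution Y"
    unfolding Y_def by (rule is_distribution_vector_matrix_mult[OF x stochastic_mpow[OF B]])
  have "tv_dist (x v* inhom_prod Q (Suc m)) (x v* mpow B (Suc m)) = tv_dist (X v* Q (Suc m)) (Y v* B)"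
    by (simp add: X_def Y_def vector_matrix_mul_assoc)
  also have "\<dots> \<le> tv_dist (X v* Q (Suc m)) (X v* B) + tv_dist (X v* B) (Y v* B)"
    by (rule tv_dist_triangle)
  also have "\<dots> \<le> e + real m * e"
  proof (rule add_mono)
    show "tv_dist (X v* Q (Suc m)) (X v* B) \<le> e"
      using Suc.prems by (intro tv_dist_vector_matrix_mult_rows[OF X]) auto
    have "tv_dist X Y \<le> real m * e"
      unfolding X_def Y_def using Suc.prems by (intro Suc.hyps) auto
    then show "tv_dist (X v* B) (Y v* B) \<le> real m * e"
      using tv_dist_vector_matrix_mult_le[OF B X Y] by linarith
  qed
  finally show ?case by (simp add: algebra_simps)
qed

lemma tv_dist_inhom_prod_le_mixing:
  assumes \<mu>: "is_distribution \<mu>" and B: "stochastic B"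
    and mixing: "\<And>\<nu>. is_distribution \<nu> \<Longrightarrow> tv_dist (\<nu> v* mpow B \<tau>) \<pi> \<le> \<epsilon>"
    and "\<tau> \<le> k"
    and Q: "\<And>j. 1 \<le> j \<Longrightarrow> j \<le> k \<Longrightarrow> stochastic (Q j)"
    and rows: "\<And>j i. k - \<tau> < j \<Longrightarrow> j \<le> k \<Longrightarrow> tv_dist (Q j $ i) (B $ i) \<le> e"
  shows "tv_dist (\<mu> v* inhom_prod Q k) \<pi> \<le> real \<tau> * e + \<epsilon>"
proof -
  define a where "a = k - \<tau>"
  have k: "k = a + \<tau>" using \<open>\<tau> \<le> k\<close> by (simp add: a_def)
  define x where "x = \<mu> v* inhom_prod Q a"
  have x: "is_distribution x"
    unfolding x_def using Q k
    by (intro is_distribution_vector_matrix_mult[OF \<mu>] stochastic_inhom_prod) auto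
  have eq: "\<mu> v* inhom_prod Q k = x v* inhom_prod (\<lambda>j. Q (a + j)) \<tau>"
    unfolding x_def k inhom_prod_add by (simp add: vector_matrix_mul_assoc)
  have "tv_dist (x v* inhom_prod (\<lambda>j. Q (a + j)) \<tau>) (x v* mpow B \<tau>) \<le> real \<tau> * e"
    using Q rows k by (intro tv_dist_inhom_prod_mpow_le[OF x B]) auto
  moreover have "tv_dist (x v* mpow B \<tau>) \<pi> \<le> \<epsilon>" by (rule mixing[OF x])
  ultimately show ?thesis
    using tv_dist_triangle[of "\<mu> v* inhom_prod Q k" \<pi> "x v* mpow B \<tau>"] eq by simp
qed

lemma tv_dist_inhom_prod_le_drift:
  assumes \<mu>: "is_distribution \<mu>" and B: "stochastic B" and \<pi>: "is_distribution \<pi>" and "0 < \<epsilon>"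
    and mixing: "\<And>\<nu>. is_distribution \<nu> \<Longrightarrow> tv_dist (\<nu> v* mpow B \<tau>) \<pi> \<le> \<epsilon> / 2"
    and Q: "\<And>j. 1 \<le> j \<Longrightarrow> j \<le> k \<Longrightarrow> stochastic (Q j)"
    and drift: "\<And>j i. j \<le> k \<Longrightarrow> tv_dist (Q j $ i) (B $ i) \<le> real (k - j) * L"
    and L: "0 \<le> L" "real k * L \<le> 1" and budget: "2 * (real \<tau>)\<^sup>2 \<le> \<epsilon> * real k"
  shows "tv_dist (\<mu> v* inhom_prod Q k) \<pi> \<le> \<epsilon>"
proof (cases "\<tau> \<le> k")
  case True
  have rows: "tv_dist (Q j $ i) (B $ i) \<le> real \<tau> * L" if "k - \<tau> < j" "j \<le> k" for j i
  proof -
    have "k - j \<le> \<tau>" using that by linarith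
    then have "real (k - j) * L \<le> real \<tau> * L" using L(1) by (intro mult_right_mono) auto
    with drift[OF that(2)] show ?thesis by (rule order.trans)
  qed
  have "tv_dist (\<mu> v* inhom_prod Q k) \<pi> \<le> real \<tau> * (real \<tau> * L) + \<epsilon> / 2"
    by (rule tv_dist_inhom_prod_le_mixing[OF \<mu> B mixing True Q rows])
  moreover have "2 * (real \<tau>)\<^sup>2 * L \<le> \<epsilon> * (real k * L)"
    using mult_right_mono[OF budget L(1)] by (simp add: mult.assoc)
  moreover have "\<epsilon> * (real k * L) \<le> \<epsilon>" using L(2) \<open>0 < \<epsilon>\<close> by simp
  ultimately show ?thesis by (simp add: power2_eq_square)
next
  case False
  have "2 * real \<tau> * real \<tau> \<le> \<epsilon> * real k" using budget by (simp add: power2_eq_square)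
  also have "\<dots> < \<epsilon> * real \<tau>" using False \<open>0 < \<epsilon>\<close> by simp
  finally have "2 < \<epsilon>" using False by simp
  moreover have "tv_dist (\<mu> v* inhom_prod Q k) \<pi> \<le> 1"
    using is_distribution_vector_matrix_mult[OF \<mu> stochastic_inhom_prod[OF Q]] \<pi> by (rule tv_dist_le_1)
  ultimately show ?thesis by linarith
qed

subsection \<open>Irreducible aperiodic chains are primitive\<close>

definition primitive_chain :: "real^'n::finite^'n \<Rightarrow> bool" where
  "primitive_chain P \<longleftrightarrow> (\<exists>M. \<forall>i j. 0 < mpow P M $ i $ j)"

lemma add_closed_mult_mem:
  fixes S :: "nat set"
  assumes add: "\<And>a b. a \<in> S \<Longrightarrow> b \<in> S \<Longrightarrow> a + b \<in> S" and "b \<in> S" "0 < k"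
  shows "k * b \<in> S"
proof -
  have "Suc l * b \<in> S" for l by (induct l) (auto simp: add \<open>b \<in> S\<close>)
  then show ?thesis using \<open>0 < k\<close> gr0_implies_Suc by blast
qed

text \<open>The least positive difference \<open>d\<close> of two elements of \<open>S\<close> divides every element: otherwise
  \<open>x + (q + 1) b - (q a + b) = x mod d\<close>, with \<open>x = q d + x mod d\<close> and \<open>a = b + d\<close>, would be a
  smaller one. So \<open>d\<close> divides \<open>Gcd S = 1\<close>.\<close>
lemma add_closed_Gcd_1_consecutive:
  fixes S :: "nat set"
  assumes add: "\<And>a b. a \<in> S \<Longrightarrow> b \<in> S \<Longrightarrow> a + b \<in> S"
    and pos: "\<And>a. a \<in> S \<Longrightarrow> 0 < a" and Gcd: "Gcd S = 1"
  shows "\<exists>b. 0 < b \<and> b \<in> S \<and> b + 1 \<in> S"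
proof -
  obtain s where s: "s \<in> S" using Gcd by fastforce
  define D where "D = {d. 0 < d \<and> (\<exists>a\<in>S. \<exists>b\<in>S. a = b + d)}"
  have "s \<in> D" using s pos add[OF s s] by (auto simp: D_def)
  define d where "d = (LEAST d. d \<in> D)"
  have "d \<in> D" unfolding d_def by (rule LeastI) fact
  then obtain a b where ab: "a \<in> S" "b \<in> S" "a = b + d" "0 < d" by (auto simp: D_def)
  have "d dvd x" if x: "x \<in> S" for x
  proof (rule ccontr)
    assume "\<not> d dvd x"
    define q where "q = x div d"
    have r: "0 < x mod d" "x mod d < d" using \<open>\<not> d dvd x\<close> ab(4) by (auto simp: dvd_eq_mod_eq_0)
    have "x + Suc q * b \<in> S" using add[OF x add_closed_mult_mem[OF add ab(2), of "Suc q"]] by simp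
    moreover have "q * a + b \<in> S"
      using ab(2) add[OF add_closed_mult_mem[OF add ab(1), of q] ab(2)] by (cases q) auto
    moreover have "x + Suc q * b = (q * a + b) + x mod d"
      using ab(3) div_mult_mod_eq[of x d] by (simp add: q_def algebra_simps)
    ultimately have "x mod d \<in> D" using r(1) unfolding D_def by blast
    then have "d \<le> x mod d" unfolding d_def by (rule Least_le)
    with r(2) show False by simp
  qed
  then have "d = 1" using Gcd by (metis Gcd_greatest nat_dvd_1_iff_1)
  then show ?thesis using ab pos by auto
qed

lemma add_closed_consecutive_contains_large:
  fixes S :: "nat set"
  assumes add: "\<And>a b. a \<in> S \<Longrightarrow> b \<in> S \<Longrightarrow> a + b \<in> S"
    and b: "0 < b" "b \<in> S" "b + 1 \<in> S" and n: "b * b \<le> n"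
  shows "n \<in> S"
proof -
  define q where "q = n div b"
  define r where "r = n mod b"
  have r: "r < b" using b by (simp add: r_def)
  have "b * b div b \<le> q" unfolding q_def using n by (rule div_le_mono)
  then have "b \<le> q" using b by simp
  have n_eq: "n = (q - r) * b + r * (b + 1)"
    using div_mult_mod_eq[of n b] r \<open>b \<le> q\<close>
    by (simp add: q_def r_def algebra_simps diff_mult_distrib)
  consider "r = 0" | "q = r" "0 < r" | "0 < r" "r < q" using r \<open>b \<le> q\<close> by linarith
  then show ?thesis
  proof cases
    case 1
    then show ?thesis using n_eq b \<open>b \<le> q\<close> add_closed_mult_mem[OF add b(2), of q] by simp
  next
    case 2
    then show ?thesis using n_eq add_closed_mult_mem[OF add b(3), of r] by simp
  next
    case 3
    then show ?thesis
      using n_eq add[OF add_closed_mult_mem[OF add b(2), of "q - r"]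
          add_closed_mult_mem[OF add b(3), of r]] by simp
  qed
qed

lemma aperiodic_diagonal_eventually_pos:
  assumes "stochastic P" "aperiodic_chain P"
  shows "\<exists>N. \<forall>n\<ge>N. 0 < mpow P n $ i $ i"
proof -
  let ?S = "{m. 0 < m \<and> 0 < mpow P m $ i $ i}"
  have add: "a + b \<in> ?S" if "a \<in> ?S" "b \<in> ?S" for a b
  proof -
    have "0 < mpow P a $ i $ i * mpow P b $ i $ i" using that by simp
    also have "\<dots> \<le> mpow P (a + b) $ i $ i" by (rule mpow_entry_mult_le[OF assms(1)])
    finally show ?thesis using that by simp
  qed
  have "Gcd ?S = 1" using assms(2) by (simp add: aperiodic_chain_def)
  then obtain b where "0 < b" "b \<in> ?S" "b + 1 \<in> ?S"
    using add_closed_Gcd_1_consecutive[of ?S, OF add] by blast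
  then have "n \<in> ?S" if "b * b \<le> n" for n
    using add_closed_consecutive_contains_large[of ?S b n, OF add] that by blast
  then show ?thesis by blast
qed

lemma irreducible_aperiodic_primitive:
  assumes st: "stochastic P" and "irreducible_chain P" "aperiodic_chain P"
  shows "primitive_chain P"
proof -
  obtain N where N: "\<And>i n. N i \<le> n \<Longrightarrow> 0 < mpow P n $ i $ i"
    using aperiodic_diagonal_eventually_pos[OF st assms(3)] by metis
  obtain m where m: "\<And>i j. 0 < mpow P (m i j) $ i $ j"
    using assms(2) unfolding irreducible_chain_def by metis
  define M where "M = (\<Sum>i\<in>UNIV. N i) + (\<Sum>i\<in>UNIV. \<Sum>j\<in>UNIV. m i j)"
  have "0 < mpow P M $ i $ j" for i j
  proof -
    have "m i j \<le> (\<Sum>j\<in>UNIV. m i j)" "(\<Sum>j\<in>UNIV. m i j) \<le> (\<Sum>i\<in>UNIV. \<Sum>j\<in>UNIV. m i j)"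
      "N i \<le> (\<Sum>i\<in>UNIV. N i)"
      by (rule member_le_sum; simp)+
    then have M: "N i \<le> M - m i j" "M = (M - m i j) + m i j" unfolding M_def by linarith+
    have "0 < mpow P (M - m i j) $ i $ i * mpow P (m i j) $ i $ j" using N[OF M(1)] m by simp
    also have "\<dots> \<le> mpow P M $ i $ j"
      using mpow_entry_mult_le[OF st, of "M - m i j" i i "m i j" j] M(2) by simp
    finally show ?thesis .
  qed
  then show ?thesis unfolding primitive_chain_def by blast
qed

subsection \<open>Convergence of primitive chains\<close>

lemma is_distribution_compact: "compact {x :: real^'n::finite. is_distribution x}"
  unfolding compact_eq_bounded_closed
proof
  show "bounded {x :: real^'n. is_distribution x}"
    unfolding bounded_iff
  proof (intro exI[of _ 1] ballI)
    fix x :: "real^'n"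
    assume "x \<in> {x. is_distribution x}"
    then have "(\<Sum>i\<in>UNIV. \<bar>x $ i\<bar>) = 1" by (simp add: is_distribution_def)
    then show "norm x \<le> 1" using norm_le_l1_cart[of x] by simp
  qed
  have "{x :: real^'n. is_distribution x} = (\<Inter>i. {x. 0 \<le> x $ i}) \<inter> {x. (\<Sum>i\<in>UNIV. x $ i) = 1}"
    by (auto simp: is_distribution_def)
  moreover have "continuous_on UNIV (\<lambda>x :: real^'n. x $ i)" for i
    by (rule linear_continuous_on[OF bounded_linear_vec_nth])
  ultimately show "closed {x :: real^'n. is_distribution x}"
    by (simp only:) (intro closed_Int closed_INT ballI closed_Collect_le closed_Collect_eq
        continuous_on_const continuous_on_sum)
qed

lemma is_distribution_convex: "convex {x :: real^'n::finite. is_distribution x}"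
  unfolding convex_def is_distribution_def
  by (auto simp: sum.distrib sum_distrib_left[symmetric])

text \<open>Brouwer's fixed point theorem on the probability simplex.\<close>
lemma stochastic_stationary_exists:
  assumes "stochastic (P :: real^'n::finite^'n)"
  shows "\<exists>\<pi>. is_stationary P \<pi>"
proof -
  have "is_distribution (\<chi> i. 1 / real CARD('n) :: real^'n)"
    by (simp add: is_distribution_def)
  then have "{x :: real^'n. is_distribution x} \<noteq> {}" by blast
  moreover have "continuous_on {x. is_distribution x} (\<lambda>x. x v* P)"
  proof -
    have "(\<lambda>x. x v* P) = (*v) (transpose P)" by (simp add: fun_eq_iff)
    then show ?thesis by (metis matrix_vector_mult_linear_continuous_on)
  qed
  ultimately obtain x where "is_distribution x" "x v* P = x"
    using brouwer[OF is_distribution_compact is_distribution_convex]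
      is_distribution_vector_matrix_mult[OF _ assms] by blast
  then show ?thesis by (auto simp: is_stationary_def)
qed

lemma primitive_mpow_contraction:
  assumes "stochastic (P :: real^'n::finite^'n)" "primitive_chain P"
  obtains r M where "0 \<le> r" "r < 1"
    "\<And>x y. is_distribution x \<Longrightarrow> is_distribution y \<Longrightarrow>
       tv_dist (x v* mpow P M) (y v* mpow P M) \<le> r * tv_dist x y"
proof -
  obtain M where pos: "\<And>i j. 0 < mpow P M $ i $ j"
    using assms(2) by (auto simp: primitive_chain_def)
  define c where "c = Min (range (\<lambda>(i, j). mpow P M $ i $ j))"
  have c: "c \<le> mpow P M $ i $ j" for i j unfolding c_def by (rule Min_le) auto
  have "c \<in> range (\<lambda>(i, j). mpow P M $ i $ j)" unfolding c_def by (rule Min_in) auto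
  then have "0 < c" using pos by auto
  have "real CARD('n) * c = (\<Sum>j\<in>(UNIV :: 'n set). c)" by simp
  also have "\<dots> \<le> (\<Sum>j\<in>UNIV. mpow P M $ undefined $ j)" by (intro sum_mono c)
  also have "\<dots> = 1" by (rule stochastic_row_sum[OF stochastic_mpow[OF assms(1)]])
  finally show ?thesis
    using \<open>0 < c\<close> tv_dist_vector_matrix_mult_contract[OF stochastic_mpow[OF assms(1)] c]
    by (intro that[of "1 - real CARD('n) * c" M]) auto
qed

lemma primitive_stationary_unique:
  assumes "stochastic P" "primitive_chain P" "is_stationary P \<pi>" "is_stationary P \<pi>'"
  shows "\<pi>' = \<pi>"
proof -
  obtain r M where "0 \<le> r" "r < 1" and contract: "\<And>x y. is_distribution x \<Longrightarrow>
      is_distribution y \<Longrightarrow> tv_dist (x v* mpow P M) (y v* mpow P M) \<le> r * tv_dist x y"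
    using primitive_mpow_contraction[OF assms(1,2)] by blast
  have "\<pi> v* mpow P M = \<pi>" "\<pi>' v* mpow P M = \<pi>'"
    using assms(3,4) by (simp_all add: is_stationary_def vector_mpow_stationary)
  moreover have "is_distribution \<pi>" "is_distribution \<pi>'"
    using assms(3,4) by (simp_all add: is_stationary_def)
  ultimately have "tv_dist \<pi>' \<pi> \<le> r * tv_dist \<pi>' \<pi>"
    using contract[of \<pi>' \<pi>] by simp
  then have "(1 - r) * tv_dist \<pi>' \<pi> \<le> 0" by (simp add: algebra_simps)
  then have "tv_dist \<pi>' \<pi> = 0"
    using \<open>r < 1\<close> tv_dist_nonneg[of \<pi>' \<pi>] by (simp add: mult_le_0_iff)
  then show ?thesis by (simp add: tv_dist_eq_0_iff)
qed

lemma primitive_stat_dist_stationary: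
  assumes "stochastic P" "primitive_chain P"
  shows "is_stationary P (stat_dist P)"
proof -
  obtain \<pi> where \<pi>: "is_stationary P \<pi>" using stochastic_stationary_exists[OF assms(1)] by blast
  then have "stat_dist P = \<pi>"
    unfolding stat_dist_def by (rule the_equality) (use \<pi> primitive_stationary_unique[OF assms \<pi>] in auto)
  with \<pi> show ?thesis by simp
qed

lemma primitive_converges:
  assumes "stochastic P" "primitive_chain P" "0 < e"
  shows "\<exists>T. \<forall>\<nu>. is_distribution \<nu> \<longrightarrow> tv_dist (\<nu> v* mpow P T) (stat_dist P) \<le> e"
proof -
  obtain r M where r: "0 \<le> r" "r < 1" and contract: "\<And>x y. is_distribution x \<Longrightarrow>
      is_distribution y \<Longrightarrow> tv_dist (x v* mpow P M) (y v* mpow P M) \<le> r * tv_dist x y"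
    using primitive_mpow_contraction[OF assms(1,2)] by blast
  define \<pi> where "\<pi> = stat_dist P"
  have \<pi>: "is_distribution \<pi>" "\<pi> v* mpow P M = \<pi>"
    using primitive_stat_dist_stationary[OF assms(1,2)]
    by (simp_all add: \<pi>_def is_stationary_def vector_mpow_stationary)
  have geometric: "tv_dist (\<nu> v* mpow P (M * j)) \<pi> \<le> r ^ j" if \<nu>: "is_distribution \<nu>" for \<nu> j
  proof (induct j)
    case 0
    then show ?case using tv_dist_le_1[OF \<nu> \<pi>(1)] by simp
  next
    case (Suc j)
    have "mpow P (M * Suc j) = mpow P (M * j) ** mpow P M"
      using mpow_add[of P "M * j" M] by (simp add: add.commute)
    then have "tv_dist (\<nu> v* mpow P (M * Suc j)) \<pi>
        = tv_dist ((\<nu> v* mpow P (M * j)) v* mpow P M) (\<pi> v* mpow P M)"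
      by (simp add: \<pi>(2) vector_matrix_mul_assoc)
    also have "\<dots> \<le> r * tv_dist (\<nu> v* mpow P (M * j)) \<pi>"
      by (intro contract is_distribution_vector_matrix_mult[OF \<nu>] stochastic_mpow assms(1) \<pi>(1))
    also have "\<dots> \<le> r * r ^ j" using Suc r(1) by (rule mult_left_mono)
    finally show ?case by simp
  qed
  obtain j where "r ^ j < e" using real_arch_pow_inv[OF assms(3) r(2)] by blast
  then have "tv_dist (\<nu> v* mpow P (M * j)) (stat_dist P) \<le> e" if "is_distribution \<nu>" for \<nu>
    using geometric[OF that, of j] by (simp add: \<pi>_def)
  then show ?thesis by blast
qed

lemma tmix_mixing:
  assumes "stochastic P" "primitive_chain P" "0 < e" "is_distribution \<nu>"
  shows "tv_dist (\<nu> v* mpow P (tmix P e)) (stat_dist P) \<le> e"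
  using LeastI_ex[OF primitive_converges[OF assms(1-3)]] assms(4) by (simp add: tmix_def)

subsection \<open>The interpolated chains\<close>

lemma interp_nth: "interp P0 P1 s $ i $ j = (1 - s) * P0 $ i $ j + s * P1 $ i $ j"
  by (simp add: interp_def)

lemma stochastic_interp:
  assumes "stochastic P0" "stochastic P1" "0 \<le> s" "s \<le> 1"
  shows "stochastic (interp P0 P1 s)"
  using assms stochastic_row_sum[OF assms(1)] stochastic_row_sum[OF assms(2)]
    stochastic_nonneg[OF assms(1)] stochastic_nonneg[OF assms(2)]
  by (simp add: stochastic_def is_distribution_def interp_nth sum.distrib
      sum_distrib_left[symmetric])

lemma mpow_entry_mono_scaled:
  assumes "stochastic A" "stochastic B" "0 \<le> t" and le: "\<And>i j. t * B $ i $ j \<le> A $ i $ j"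
  shows "t ^ m * mpow B m $ i $ j \<le> mpow A m $ i $ j"
proof (induct m arbitrary: i j)
  case 0
  then show ?case by (simp add: mat_def)
next
  case (Suc m)
  have "t ^ Suc m * mpow B (Suc m) $ i $ j = (\<Sum>l\<in>UNIV. (t ^ m * mpow B m $ i $ l) * (t * B $ l $ j))"
    by (simp add: matrix_matrix_mult_nth sum_distrib_left algebra_simps)
  also have "\<dots> \<le> (\<Sum>l\<in>UNIV. mpow A m $ i $ l * A $ l $ j)"
    by (intro sum_mono mult_mono Suc le stochastic_nonneg stochastic_mpow assms
        mult_nonneg_nonneg zero_le_power)
  also have "\<dots> = mpow A (Suc m) $ i $ j" by (simp add: matrix_matrix_mult_nth)
  finally show ?case .
qed

lemma primitive_interp:
  assumes "stochastic P0" "stochastic P1" "primitive_chain P1" "0 < s" "s \<le> 1"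
  shows "primitive_chain (interp P0 P1 s)"
proof -
  obtain M where M: "\<And>i j. 0 < mpow P1 M $ i $ j"
    using assms(3) by (auto simp: primitive_chain_def)
  have "s * P1 $ i $ j \<le> interp P0 P1 s $ i $ j" for i j
    using stochastic_nonneg[OF assms(1), of i j] assms(4,5) by (simp add: interp_nth)
  then have "s ^ M * mpow P1 M $ i $ j \<le> mpow (interp P0 P1 s) M $ i $ j" for i j
    using assms by (intro mpow_entry_mono_scaled stochastic_interp) auto
  moreover have "0 < s ^ M * mpow P1 M $ i $ j" for i j using M assms(4) by simp
  ultimately show ?thesis unfolding primitive_chain_def by (meson less_le_trans)
qed

lemma tv_dist_interp_rows:
  assumes "stochastic P0" "stochastic P1"
  shows "tv_dist (interp P0 P1 a $ i) (interp P0 P1 b $ i) \<le> \<bar>a - b\<bar>"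
proof -
  have "(\<Sum>j\<in>UNIV. \<bar>interp P0 P1 a $ i $ j - interp P0 P1 b $ i $ j\<bar>)
      = (\<Sum>j\<in>UNIV. \<bar>a - b\<bar> * \<bar>P1 $ i $ j - P0 $ i $ j\<bar>)"
    by (intro sum.cong refl) (simp add: interp_nth abs_mult[symmetric] algebra_simps)
  also have "\<dots> \<le> (\<Sum>j\<in>UNIV. \<bar>a - b\<bar> * (P1 $ i $ j + P0 $ i $ j))"
    using stochastic_nonneg[OF assms(1)] stochastic_nonneg[OF assms(2)]
    by (intro sum_mono mult_left_mono) (auto simp: abs_if)
  also have "\<dots> = \<bar>a - b\<bar> * 2"
    using stochastic_row_sum[OF assms(1), of i] stochastic_row_sum[OF assms(2), of i]
    by (simp add: sum_distrib_left[symmetric] sum.distrib)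
  finally show ?thesis by (simp add: tv_dist_def interp_nth)
qed

lemma tmix_le_tmix_unif:
  "s \<in> {0..1} \<Longrightarrow> ereal (real (tmix (interp P0 P1 s) e)) \<le> tmix_unif P0 P1 e"
  unfolding tmix_unif_def by (rule SUP_upper)

lemma square_le_of_ereal_bound:
  fixes U :: ereal
  assumes "ereal \<tau> \<le> U" "0 \<le> \<tau>" "0 < c" "2 * U\<^sup>2 / ereal c \<le> ereal x"
  shows "2 * \<tau>\<^sup>2 \<le> c * x"
proof (cases U)
  case (real u)
  then have "2 * u\<^sup>2 / c \<le> x" using assms(3,4) by (simp add: power2_eq_square)
  then have "2 * u\<^sup>2 \<le> c * x" using assms(3) by (simp add: divide_le_eq mult.commute)
  moreover have "\<tau>\<^sup>2 \<le> u\<^sup>2" using assms(1,2) real by (intro power_mono) auto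
  ultimately show ?thesis by linarith
qed (use assms in \<open>auto simp: power2_eq_square\<close>)

theorem theorem2:
  fixes P0 P1 :: "real^'n::finite^'n" and \<delta> \<epsilon> :: real and T k :: nat
  assumes "stochastic P0" "irreducible_chain P0" "aperiodic_chain P0"
    and "stochastic P1" "irreducible_chain P1" "aperiodic_chain P1"
    and "0 < \<delta>" "\<delta> \<le> 1" "0 < \<epsilon>"
    and "2 * (tmix_unif P0 P1 (\<epsilon> / 2))\<^sup>2 / ereal (\<epsilon> * \<delta>) \<le> ereal (real T)"
    and "\<delta> \<le> real k / real T" "real k / real T \<le> 1"
  shows "tv_dist (stat_dist (interp P0 P1 0) v* inhom_prod (\<lambda>j. interp P0 P1 (real j / real T)) k)
                 (stat_dist (interp P0 P1 (real k / real T))) \<le> \<epsilon>"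
proof -
  define s where "s = real k / real T"
  define Q where "Q = (\<lambda>j. interp P0 P1 (real j / real T))"
  define \<tau> where "\<tau> = tmix (interp P0 P1 s) (\<epsilon> / 2)"
  have "T \<noteq> 0"
  proof
    assume "T = 0"
    with assms(7,11) show False by simp
  qed
  then have T: "0 < T" "k \<le> T" "\<delta> * real T \<le> real k"
    using assms(11,12) by (simp_all add: divide_le_eq le_divide_eq)
  have s: "0 < s" "s \<le> 1" using assms(7,11,12) by (simp_all add: s_def)
  have Ps: "stochastic (interp P0 P1 s)" "primitive_chain (interp P0 P1 s)"
    using s stochastic_interp[OF assms(1,4)]
      primitive_interp[OF assms(1,4) irreducible_aperiodic_primitive[OF assms(4-6)]] by auto
  have \<pi>0: "is_distribution (stat_dist (interp P0 P1 0))"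
    using primitive_stat_dist_stationary[OF assms(1) irreducible_aperiodic_primitive[OF assms(1-3)]]
    by (simp add: interp_def is_stationary_def)
  have \<pi>s: "is_distribution (stat_dist (interp P0 P1 s))"
    using primitive_stat_dist_stationary[OF Ps] by (simp add: is_stationary_def)
  have mixing: "tv_dist (\<nu> v* mpow (interp P0 P1 s) \<tau>) (stat_dist (interp P0 P1 s)) \<le> \<epsilon> / 2"
    if "is_distribution \<nu>" for \<nu>
    unfolding \<tau>_def using assms(9) that by (intro tmix_mixing Ps) auto
  have Q: "stochastic (Q j)" if "1 \<le> j" "j \<le> k" for j
    using that T assms(1,4) by (auto simp: Q_def divide_le_eq intro!: stochastic_interp)
  have drift: "tv_dist (Q j $ i) (interp P0 P1 s $ i) \<le> real (k - j) * (1 / real T)" if "j \<le> k" for j i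
    using tv_dist_interp_rows[OF assms(1,4), of "real j / real T" i s] that
    by (simp add: Q_def s_def diff_divide_distrib[symmetric] of_nat_diff)
  have "2 * (real \<tau>)\<^sup>2 \<le> \<epsilon> * \<delta> * real T"
    using tmix_le_tmix_unif[of s] s assms(7,9,10) unfolding \<tau>_def
    by (intro square_le_of_ereal_bound) auto
  also have "\<dots> \<le> \<epsilon> * real k"
    using mult_left_mono[OF T(3), of \<epsilon>] assms(9) by (simp add: mult.assoc)
  finally have budget: "2 * (real \<tau>)\<^sup>2 \<le> \<epsilon> * real k" .
  have "tv_dist (stat_dist (interp P0 P1 0) v* inhom_prod Q k) (stat_dist (interp P0 P1 s)) \<le> \<epsilon>"
    by (rule tv_dist_inhom_prod_le_drift[OF \<pi>0 Ps(1) \<pi>s assms(9) mixing Q drift _ _ budget])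
      (use T in \<open>auto simp: divide_le_eq\<close>)
  then show ?thesis by (simp add: Q_def s_def)
qed

end
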